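(* For every $r\in\mathbb{N}$ there exist moulds ${}_r\mathrm{Sem}^\bullet$ on $\mathcal{A}(F)$ and ${}_r\mathrm{sem}^\bullet$ on $A(F)$ such that $$F^r_{\rm Sem}=F_{\rm lin}\Big(\sum_{\mathbf{m}}{}_r\mathrm{Sem}^{\mathbf{m}}D_{\mathbf{m}}\Big)=F_{\rm lin}\Big(\sum_{\mathbf{n}}{}_r\mathrm{sem}^{\mathbf{n}}B_{\mathbf{n}}\Big).$$
   Context: Fix $\nu\ge1$, $\lambda\in\mathbb{C}^\nu$, $\lambda\cdot m=\sum_i\lambda_im_i$. Let $f(x)=(e^{\lambda_1}x_1,\dots,e^{\lambda_\nu}x_\nu)+h(x)$ be a local analytic diffeomorphism of $(\mathbb{C}^\nu,0)$, $F(\varphi)=\varphi\circ f$ its substitution operator on $\mathbb{C}[[x]]$, $F_{\rm lin}(x^m)=e^{\lambda\cdot m}x^m$. An operator is homogeneous of degree $n\in\mathbb{Z}^\nu$ if it maps $x^m$ to a multiple of $x^{m+n}$ for all $m$. Write $F=F_{\rm lin}(\mathrm{Id}+\sum_{n\in A(F)}B_n)=F_{\rm lin}\exp(\sum_{m\in\mathcal{A}(F)}D_m)$ with $B_n$ homogeneous of degree $n$ and $D_m$ homogeneous derivations of degree $m$; $A(F),\mathcal{A}(F)\subset\mathbb{Z}^\nu$ are taken closed under addition (adding degrees carrying the zero operator is harmless). For words, $B_{\mathbf{n}}=B_{n_1}\circ\cdots\circ B_{n_r}$, $D_{\mathbf{m}}$ likewise (identity on the empty word); moulds are complex-valued functions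 on words; sums are formal. A letter $m$ is resonant if $e^{\lambda\cdot m}=1$. Trimmed form up to order $r$: set $F^0_{\rm Sem}=F$; given $F^{i-1}_{\rm Sem}=F_{\rm lin}\exp(\sum_m{}_iD_m)$ with ${}_iD_m$ its homogeneous derivation components of degree $m$, put $\mathbf{V}_i=\sum_{m:\,e^{\lambda\cdot m}\neq1}\frac{{}_iD_m}{1-e^{\lambda\cdot m}}$ and $F^i_{\rm Sem}=\exp(\mathbf{V}_i)\circ F^{i-1}_{\rm Sem}\circ\exp(-\mathbf{V}_i)$. *)

theory Defs
  imports "HOL-Analysis.Analysis"
begin

text \<open>Formal power series in \<nu> variables, \<nu> = CARD('n) for a finite index type 'n.
  A series is its coefficient function on exponent vectors.\<close>

type_synonym 'n mser = "('n \<Rightarrow> nat) \<Rightarrow> complex"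
type_synonym 'n mop = "'n mser \<Rightarrow> 'n mser"

definition mdeg :: "('n::finite \<Rightarrow> nat) \<Rightarrow> nat" where
  "mdeg m = (\<Sum>i\<in>UNIV. m i)"

definition unitv :: "'n \<Rightarrow> 'n \<Rightarrow> nat" where
  "unitv j = (\<lambda>i. if i = j then 1 else 0)"

definition mono :: "('n \<Rightarrow> nat) \<Rightarrow> 'n mser" where
  "mono m = (\<lambda>k. if k = m then 1 else 0)"

text \<open>Coefficient of x^k in f^m = prod_j f_j^(m_j): sum over the ways of choosing one
  monomial from each of the m_j factors f_j (factors indexed by pairs (j,t), t < m j).\<close>
definition mpow_coeff :: "('n::finite \<Rightarrow> 'n mser) \<Rightarrow> ('n \<Rightarrow> nat) \<Rightarrow> ('n \<Rightarrow> nat) \<Rightarrow> complex" where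
  "mpow_coeff f m k =
     (let P = Sigma UNIV (\<lambda>j. {..< m j}) in
      \<Sum>a \<in> {a \<in> PiE P (\<lambda>_. {p. p \<le> k}). \<forall>i. (\<Sum>q\<in>P. a q i) = k i}.
         \<Prod>q\<in>P. f (fst q) (a q))"

text \<open>Substitution phi o f (f without constant term): coefficient of x^k.\<close>
definition subst :: "'n mser \<Rightarrow> ('n::finite \<Rightarrow> 'n mser) \<Rightarrow> 'n mser" where
  "subst \<phi> f = (\<lambda>k. \<Sum>m \<in> {m. mdeg m \<le> mdeg k}. \<phi> m * mpow_coeff f m k)"

text \<open>f(x) = (e^{lam_1} x_1, ..., e^{lam_nu} x_nu) + h(x).\<close>
definition diffeo :: "('n \<Rightarrow> complex) \<Rightarrow> ('n \<Rightarrow> 'n mser) \<Rightarrow> ('n \<Rightarrow> 'n mser)" where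
  "diffeo lam h = (\<lambda>j m. (if m = unitv j then exp (lam j) else 0) + h j m)"

definition Fsub :: "('n::finite \<Rightarrow> complex) \<Rightarrow> ('n \<Rightarrow> 'n mser) \<Rightarrow> 'n mop" where
  "Fsub lam h = (\<lambda>\<phi>. subst \<phi> (diffeo lam h))"

definition ldot :: "('n::finite \<Rightarrow> complex) \<Rightarrow> ('n \<Rightarrow> nat) \<Rightarrow> complex" where
  "ldot lam k = (\<Sum>i\<in>UNIV. lam i * of_nat (k i))"

definition ldeg :: "('n::finite \<Rightarrow> complex) \<Rightarrow> ('n \<Rightarrow> int) \<Rightarrow> complex" where
  "ldeg lam n = (\<Sum>i\<in>UNIV. lam i * of_int (n i))"

definition Flin :: "('n::finite \<Rightarrow> complex) \<Rightarrow> 'n mop" where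
  "Flin lam = (\<lambda>\<phi> k. exp (ldot lam k) * \<phi> k)"

definition Flin_inv :: "('n::finite \<Rightarrow> complex) \<Rightarrow> 'n mop" where
  "Flin_inv lam = (\<lambda>\<phi> k. exp (- ldot lam k) * \<phi> k)"

text \<open>Homogeneous component of degree n of a (continuous linear) operator T:
  it sends x^p to [x^(p+n)] T(x^p) * x^(p+n).\<close>
definition hcomp :: "'n mop \<Rightarrow> ('n \<Rightarrow> int) \<Rightarrow> 'n mop" where
  "hcomp T n = (\<lambda>\<phi> k. if (\<forall>i. 0 \<le> int (k i) - n i)
       then (let p = (\<lambda>i. nat (int (k i) - n i)) in T (mono p) k * \<phi> p) else 0)"

definition opsum :: "('i \<Rightarrow> 'n mop) \<Rightarrow> 'i set \<Rightarrow> 'n mop" where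
  "opsum T I = (\<lambda>\<phi> k. \<Sum>\<^sub>\<infinity> i\<in>I. T i \<phi> k)"

definition mexp :: "'n mop \<Rightarrow> 'n mop" where
  "mexp Z = (\<lambda>\<phi> k. \<Sum>\<^sub>\<infinity> j\<in>(UNIV::nat set). (Z ^^ j) \<phi> k / fact j)"

definition mlog :: "'n mop \<Rightarrow> 'n mop" where
  "mlog G = (\<lambda>\<phi> k. \<Sum>\<^sub>\<infinity> j\<in>{(1::nat)..}.
      ((-1::complex) ^ (j + 1) / of_nat j) * (((\<lambda>\<psi> l. G \<psi> l - \<psi> l) ^^ j) \<phi> k))"

text \<open>B_n: F = F_lin (Id + sum_n B_n), B_n homogeneous of degree n.\<close>
definition Bop :: "('n::finite \<Rightarrow> complex) \<Rightarrow> ('n \<Rightarrow> 'n mser) \<Rightarrow> ('n \<Rightarrow> int) \<Rightarrow> 'n mop" where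
  "Bop lam h n = hcomp (\<lambda>\<phi> k. Flin_inv lam (Fsub lam h \<phi>) k - \<phi> k) n"

text \<open>Homogeneous components of degree m of log(F_lin^{-1} G), i.e. G = F_lin exp(sum_m D_m).\<close>
definition Dcomp :: "('n::finite \<Rightarrow> complex) \<Rightarrow> 'n mop \<Rightarrow> ('n \<Rightarrow> int) \<Rightarrow> 'n mop" where
  "Dcomp lam G m = hcomp (mlog (\<lambda>\<phi>. Flin_inv lam (G \<phi>))) m"

definition Dop :: "('n::finite \<Rightarrow> complex) \<Rightarrow> ('n \<Rightarrow> 'n mser) \<Rightarrow> ('n \<Rightarrow> int) \<Rightarrow> 'n mop" where
  "Dop lam h m = Dcomp lam (Fsub lam h) m"

definition wop :: "('a \<Rightarrow> 'n mop) \<Rightarrow> 'a list \<Rightarrow> 'n mop" where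
  "wop Op w = foldr (\<lambda>n acc. Op n \<circ> acc) w id"

definition mould_sum :: "('a list \<Rightarrow> complex) \<Rightarrow> ('a \<Rightarrow> 'n mop) \<Rightarrow> 'a set \<Rightarrow> 'n mop" where
  "mould_sum M Op A = (\<lambda>\<phi> k. \<Sum>\<^sub>\<infinity> w\<in>lists A. M w * wop Op w \<phi> k)"

fun Semtrim :: "('n::finite \<Rightarrow> complex) \<Rightarrow> ('n \<Rightarrow> 'n mser) \<Rightarrow> nat \<Rightarrow> 'n mop" where
  "Semtrim lam h 0 = Fsub lam h"
| "Semtrim lam h (Suc i) =
     (let G = Semtrim lam h i;
          V = opsum (\<lambda>m \<phi> k. Dcomp lam G m \<phi> k / (1 - exp (ldeg lam m)))
                    {m. exp (ldeg lam m) \<noteq> 1}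
      in mexp V \<circ> G \<circ> mexp (\<lambda>\<phi> k. - V \<phi> k))"

end

theory Submission
  imports Defs "HOL-Computational_Algebra.Formal_Power_Series"
begin

(* The operators B_n and D_m are homogeneous of degree n (resp. m) and raise the total degree.
   For such a graded family only finitely many words act on a given coefficient x^k (they are
   short and their letters are small compared with |k|), so every mould expansion
   sum_w M^w Op_w is coefficientwise a finite sum.  Hence mould expansions compose by the mould
   product, and exp, log, homogeneous components, weighted sums of components and conjugation by
   F_lin act on them by explicit operations on moulds.
   F_lin^-1 F = Id + sum_n B_n is the B-expansion with mould 1 + [length w = 1]; taking its
   logarithm exhibits the D_m as components of a B-expansion, and F_lin^-1 F = exp (sum_m D_m) is
   the D-expansion with mould exp [length w = 1].  Every trimming step is built from the
   operations above, so by induction F^r_Sem = F_lin o (mould expansion) in both alphabets. *)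

lemma infsum_eq_sum_neutral:
  assumes "finite F" "F \<subseteq> S" "\<And>x. x \<in> S - F \<Longrightarrow> f x = 0"
  shows "infsum f S = sum f F"
proof -
  have "infsum f S = infsum f F"
    by (rule infsum_cong_neutral) (use assms in auto)
  then show ?thesis using assms(1) by simp
qed

section \<open>Homogeneous and degree-raising operators\<close>

definition exp_le :: "('n \<Rightarrow> int) \<Rightarrow> ('n \<Rightarrow> nat) \<Rightarrow> bool" where
  "exp_le n k \<longleftrightarrow> (\<forall>i. n i \<le> int (k i))"

definition exp_sub :: "('n \<Rightarrow> nat) \<Rightarrow> ('n \<Rightarrow> int) \<Rightarrow> 'n \<Rightarrow> nat" where
  "exp_sub k n = (\<lambda>i. nat (int (k i) - n i))"

lemma of_nat_exp_sub: "exp_le n k \<Longrightarrow> int (exp_sub k n i) = int (k i) - n i"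
  by (simp add: exp_le_def exp_sub_def)

lemma exp_le_zero [simp]: "exp_le (\<lambda>i. 0) k"
  by (simp add: exp_le_def)

lemma exp_sub_zero [simp]: "exp_sub k (\<lambda>i. 0) = k"
  by (simp add: exp_sub_def)

lemma exp_le_exp_sub_add:
  assumes "exp_le n k" "exp_le m (exp_sub k n)"
  shows "exp_le (\<lambda>i. n i + m i) k" "exp_sub (exp_sub k n) m = exp_sub k (\<lambda>i. n i + m i)"
  using assms by (auto simp: exp_le_def exp_sub_def algebra_simps)

lemma exp_sub_inject:
  assumes "exp_le n k" "exp_le m k" "exp_sub k n = exp_sub k m"
  shows "n = m"
proof
  fix i
  have "int (exp_sub k n i) = int (exp_sub k m i)" using assms(3) by simp
  then show "n i = m i" using of_nat_exp_sub[OF assms(1)] of_nat_exp_sub[OF assms(2)] by simp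
qed

lemma ldot_exp_sub:
  assumes "exp_le n k"
  shows "ldot lam (exp_sub k n) = ldot lam k - ldeg lam n"
proof -
  have sub: "(of_nat (exp_sub k n i) :: complex) = of_nat (k i) - of_int (n i)" for i
    using arg_cong[OF of_nat_exp_sub[OF assms], of "of_int :: int \<Rightarrow> complex"] by simp
  have "ldot lam k - ldot lam (exp_sub k n) = ldeg lam n"
    unfolding ldot_def ldeg_def sum_subtractf[symmetric]
    by (rule sum.cong) (simp_all add: sub right_diff_distrib)
  then show ?thesis by (simp add: algebra_simps)
qed

lemma Flin_inv_Flin [simp]: "Flin_inv lam (Flin lam \<psi>) = \<psi>"
  by (simp add: Flin_def Flin_inv_def exp_minus fun_eq_iff)

lemma Flin_Flin_inv [simp]: "Flin lam (Flin_inv lam \<psi>) = \<psi>"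
  by (simp add: Flin_def Flin_inv_def exp_minus fun_eq_iff)

lemma eq_Flin_comp_iff: "G = Flin lam \<circ> X \<longleftrightarrow> (\<lambda>\<phi>. Flin_inv lam (G \<phi>)) = X"
proof
  assume "G = Flin lam \<circ> X"
  then show "(\<lambda>\<phi>. Flin_inv lam (G \<phi>)) = X" by auto
next
  assume "(\<lambda>\<phi>. Flin_inv lam (G \<phi>)) = X"
  then show "G = Flin lam \<circ> X" by (auto simp: comp_def)
qed

definition hcoeff :: "'n mop \<Rightarrow> ('n \<Rightarrow> int) \<Rightarrow> ('n \<Rightarrow> nat) \<Rightarrow> complex" where
  "hcoeff T n k = T (mono (exp_sub k n)) k"

lemma hcomp_apply:
  "hcomp T n \<phi> k = (if exp_le n k then hcoeff T n k * \<phi> (exp_sub k n) else 0)"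
  by (simp add: hcomp_def hcoeff_def exp_le_def exp_sub_def Let_def)

lemma mono_apply: "mono p q = (if q = p then 1 else 0)"
  by (simp add: mono_def)

definition homogeneous :: "'n mop \<Rightarrow> ('n \<Rightarrow> int) \<Rightarrow> bool" where
  "homogeneous T n \<longleftrightarrow> hcomp T n = T"

lemma homogeneous_apply:
  assumes "homogeneous T n"
  shows "T \<phi> k = (if exp_le n k then hcoeff T n k * \<phi> (exp_sub k n) else 0)"
proof -
  have "T \<phi> k = hcomp T n \<phi> k" using assms by (simp add: homogeneous_def)
  then show ?thesis by (simp only: hcomp_apply)
qed

lemma homogeneous_hcomp: "homogeneous (hcomp T n) n"
  unfolding homogeneous_def hcomp_apply hcoeff_def by (auto simp: mono_apply fun_eq_iff)

lemma homogeneous_id: "homogeneous id (\<lambda>i. 0)"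
  by (simp add: homogeneous_def hcomp_apply hcoeff_def mono_apply fun_eq_iff)

lemma homogeneous_comp:
  assumes "homogeneous S n" "homogeneous T m"
  shows "homogeneous (S \<circ> T) (\<lambda>i. n i + m i)"
  unfolding homogeneous_def
proof (intro ext)
  fix \<phi> k
  show "hcomp (S \<circ> T) (\<lambda>i. n i + m i) \<phi> k = (S \<circ> T) \<phi> k"
    unfolding hcomp_apply hcoeff_def using exp_le_exp_sub_add[of n k m]
    by (auto simp: homogeneous_apply[OF assms(1)] homogeneous_apply[OF assms(2)] mono_apply)
qed

lemma homogeneous_linear:
  assumes "homogeneous T n"
  shows "T (\<lambda>l. \<Sum>v\<in>V. c v * \<psi> v l) k = (\<Sum>v\<in>V. c v * T (\<psi> v) k)"
  by (simp add: homogeneous_apply[OF assms] sum_distrib_left sum_distrib_right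
      mult.assoc mult.left_commute)

definition raises_deg :: "'n::finite mop \<Rightarrow> nat \<Rightarrow> bool" where
  "raises_deg T d \<longleftrightarrow> (\<forall>p k. T (mono p) k \<noteq> 0 \<longrightarrow> mdeg p + d \<le> mdeg k)"

lemma raises_degD: "raises_deg T d \<Longrightarrow> T (mono p) k \<noteq> 0 \<Longrightarrow> mdeg p + d \<le> mdeg k"
  by (simp add: raises_deg_def)

lemma raises_deg_hcomp: "raises_deg T d \<Longrightarrow> raises_deg (hcomp T n) d"
  by (auto simp: raises_deg_def hcomp_apply hcoeff_def mono_apply split: if_splits)

lemma raises_deg_id: "raises_deg id 0"
  by (simp add: raises_deg_def mono_apply)

lemma raises_deg_comp:
  assumes "homogeneous S n" "raises_deg S d" "raises_deg T e"
  shows "raises_deg (S \<circ> T) (d + e)"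
  unfolding raises_deg_def
proof (intro allI impI)
  fix p k
  assume "(S \<circ> T) (mono p) k \<noteq> 0"
  then have "hcoeff S n k \<noteq> 0" "T (mono p) (exp_sub k n) \<noteq> 0"
    by (auto simp: homogeneous_apply[OF assms(1)] split: if_splits)
  then have "S (mono (exp_sub k n)) k \<noteq> 0" "T (mono p) (exp_sub k n) \<noteq> 0"
    by (simp_all add: hcoeff_def)
  then show "mdeg p + (d + e) \<le> mdeg k"
    using raises_degD[OF assms(2)] raises_degD[OF assms(3)] by fastforce
qed

lemma homogeneous_apply_cong:
  assumes "homogeneous T n" "raises_deg T d" "\<And>l. mdeg l \<le> mdeg k \<Longrightarrow> \<psi> l = \<psi>' l"
  shows "T \<psi> k = T \<psi>' k"
proof -
  have "mdeg (exp_sub k n) \<le> mdeg k" if "hcoeff T n k \<noteq> 0"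
    using raises_degD[OF assms(2)] that unfolding hcoeff_def by fastforce
  then show ?thesis using assms(3) by (auto simp: homogeneous_apply[OF assms(1)])
qed

section \<open>Words of operators\<close>

lemma wop_Nil [simp]: "wop Op [] = id"
  by (simp add: wop_def)

lemma wop_Cons [simp]: "wop Op (n # w) = Op n \<circ> wop Op w"
  by (simp add: wop_def)

lemma wop_append: "wop Op (u @ v) = wop Op u \<circ> wop Op v"
  by (induction u) auto

definition word_deg :: "('n \<Rightarrow> int) list \<Rightarrow> 'n \<Rightarrow> int" where
  "word_deg w = (\<lambda>i. \<Sum>n\<leftarrow>w. n i)"

lemma word_deg_Nil [simp]: "word_deg [] = (\<lambda>i. 0)"
  by (simp add: word_deg_def)

lemma word_deg_Cons [simp]: "word_deg (n # w) = (\<lambda>i. n i + word_deg w i)"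
  by (simp add: word_deg_def)

lemma homogeneous_wop: "(\<And>n. homogeneous (Op n) n) \<Longrightarrow> homogeneous (wop Op w) (word_deg w)"
  by (induction w) (auto simp: homogeneous_id intro: homogeneous_comp)

lemma raises_deg_wop:
  assumes "\<And>n. homogeneous (Op n) n" "\<And>n. raises_deg (Op n) 1"
  shows "raises_deg (wop Op w) (length w)"
proof (induction w)
  case Nil
  then show ?case using raises_deg_id by (simp add: id_def)
next
  case (Cons n w)
  then show ?case using raises_deg_comp[OF assms(1,2) Cons.IH] by (simp add: comp_def)
qed

lemma le_mdeg: "m i \<le> mdeg m"
  unfolding mdeg_def by (rule member_le_sum) auto

lemma finite_mdeg_le: "finite {m :: 'n::finite \<Rightarrow> nat. mdeg m \<le> K}"
proof (rule finite_subset)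
  show "{m :: 'n \<Rightarrow> nat. mdeg m \<le> K} \<subseteq> PiE UNIV (\<lambda>_. {..K})"
    using le_mdeg order_trans by (fastforce simp: PiE_UNIV_domain)
qed (simp add: finite_PiE)

definition bounded_words :: "nat \<Rightarrow> ('n \<Rightarrow> int) list set" where
  "bounded_words K = {w. set w \<subseteq> {n. \<forall>i. \<bar>n i\<bar> \<le> int K} \<and> length w \<le> K}"

lemma finite_bounded_words: "finite (bounded_words K :: ('n::finite \<Rightarrow> int) list set)"
proof -
  have "{n :: 'n \<Rightarrow> int. \<forall>i. \<bar>n i\<bar> \<le> int K} \<subseteq> PiE UNIV (\<lambda>_. {- int K..int K})"
    by (force simp: abs_le_iff)
  then have "finite {n :: 'n \<Rightarrow> int. \<forall>i. \<bar>n i\<bar> \<le> int K}"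
    by (rule finite_subset) (simp add: finite_PiE)
  then show ?thesis
    unfolding bounded_words_def by (rule finite_lists_length_le)
qed

lemma bounded_words_mono:
  assumes "K \<le> K'"
  shows "bounded_words K \<subseteq> bounded_words K'"
proof
  fix w assume "w \<in> bounded_words K"
  then have "\<forall>n\<in>set w. \<forall>i. \<bar>n i\<bar> \<le> int K" "length w \<le> K"
    by (auto simp: bounded_words_def)
  then have "\<forall>n\<in>set w. \<forall>i. \<bar>n i\<bar> \<le> int K'" "length w \<le> K'"
    using assms by (auto intro: order_trans[OF _ of_nat_mono[OF assms]])
  then show "w \<in> bounded_words K'" by (auto simp: bounded_words_def)
qed

lemma append_in_bounded_words:
  "u @ v \<in> bounded_words K \<Longrightarrow> u \<in> bounded_words K \<and> v \<in> bounded_words K"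
  by (auto simp: bounded_words_def)

lemma sum_append_split:
  assumes "finite W"
  shows "(\<Sum>(u, v) \<in> {(u, v). u @ v \<in> W}. g u v)
           = (\<Sum>w\<in>W. \<Sum>i\<le>length w. g (take i w) (drop i w))"
proof -
  have "(\<Sum>(u, v) \<in> {(u, v). u @ v \<in> W}. g u v)
      = (\<Sum>(w, i) \<in> (SIGMA w:W. {..length w}). g (take i w) (drop i w))"
    by (rule sum.reindex_bij_witness[where j = "\<lambda>(u, v). (u @ v, length u)"
          and i = "\<lambda>(w, i). (take i w, drop i w)"]) auto
  also have "\<dots> = (\<Sum>w\<in>W. \<Sum>i\<le>length w. g (take i w) (drop i w))"
    by (rule sum.Sigma[symmetric]) (auto simp: assms)
  finally show ?thesis .
qed

section \<open>Moulds\<close>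

definition mould_one :: "'a list \<Rightarrow> complex" where
  "mould_one w = (if w = [] then 1 else 0)"

definition mould_mult :: "('a list \<Rightarrow> complex) \<Rightarrow> ('a list \<Rightarrow> complex) \<Rightarrow> 'a list \<Rightarrow> complex" where
  "mould_mult M N w = (\<Sum>i\<le>length w. M (take i w) * N (drop i w))"

primrec mould_pow :: "('a list \<Rightarrow> complex) \<Rightarrow> nat \<Rightarrow> 'a list \<Rightarrow> complex" where
  "mould_pow M 0 = mould_one"
| "mould_pow M (Suc j) = mould_mult M (mould_pow M j)"

definition mould_exp :: "('a list \<Rightarrow> complex) \<Rightarrow> 'a list \<Rightarrow> complex" where
  "mould_exp M w = (\<Sum>j\<le>length w. mould_pow M j w / fact j)"

definition mould_log :: "('a list \<Rightarrow> complex) \<Rightarrow> 'a list \<Rightarrow> complex" where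
  "mould_log M w =
     (\<Sum>j\<in>{1..length w}. (-1) ^ (j + 1) / of_nat j * mould_pow (\<lambda>u. M u - mould_one u) j w)"

lemma mould_mult_Nil [simp]: "mould_mult M N [] = M [] * N []"
  by (simp add: mould_mult_def)

lemma mould_exp_Nil [simp]: "mould_exp M [] = 1"
  by (simp add: mould_exp_def mould_one_def)

lemma mould_log_Nil [simp]: "mould_log M [] = 0"
  by (simp add: mould_log_def)

lemma mould_pow_eq_0:
  assumes "M [] = 0" "length w < j"
  shows "mould_pow M j w = 0"
  using assms(2)
proof (induction j arbitrary: w)
  case 0
  then show ?case by simp
next
  case (Suc j)
  have "M (take i w) * mould_pow M j (drop i w) = 0" if "i \<le> length w" for i
    using assms(1) Suc that by (cases "i = 0") auto
  then show ?case unfolding mould_pow.simps mould_mult_def by (intro sum.neutral) auto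
qed

definition mould_of_fps :: "complex fps \<Rightarrow> 'a list \<Rightarrow> complex" where
  "mould_of_fps a w = fps_nth a (length w)"

lemma mould_one_eq_of_fps: "mould_one = mould_of_fps 1"
  by (auto simp: mould_one_def mould_of_fps_def fun_eq_iff)

lemma mould_of_fps_X: "mould_of_fps fps_X = (\<lambda>w. if length w = 1 then 1 else 0)"
  by (simp add: mould_of_fps_def fun_eq_iff)

lemma mould_mult_of_fps: "mould_mult (mould_of_fps a) (mould_of_fps b) = mould_of_fps (a * b)"
proof
  fix w :: "'a list"
  have "mould_mult (mould_of_fps a) (mould_of_fps b) w
      = (\<Sum>i\<le>length w. fps_nth a i * fps_nth b (length w - i))"
    by (auto simp: mould_mult_def mould_of_fps_def min_def intro!: sum.cong)
  then show "mould_mult (mould_of_fps a) (mould_of_fps b) w = mould_of_fps (a * b) w"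
    by (simp add: mould_of_fps_def fps_mult_nth atLeast0AtMost)
qed

lemma mould_pow_of_fps: "mould_pow (mould_of_fps a) j = mould_of_fps (a ^ j)"
  by (induction j) (simp_all add: mould_one_eq_of_fps mould_mult_of_fps)

lemma mould_exp_of_fps: "mould_exp (mould_of_fps a) = mould_of_fps (fps_exp 1 oo a)"
proof
  fix w :: "'a list"
  have "mould_exp (mould_of_fps a) w = (\<Sum>j\<le>length w. fps_nth (a ^ j) (length w) / fact j)"
    by (simp add: mould_exp_def mould_pow_of_fps mould_of_fps_def)
  also have "\<dots> = (\<Sum>j = 0..length w. fps_nth (fps_exp 1) j * fps_nth (a ^ j) (length w))"
    by (simp add: atLeast0AtMost)
  finally show "mould_exp (mould_of_fps a) w = mould_of_fps (fps_exp 1 oo a) w"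
    by (simp only: mould_of_fps_def fps_compose_nth)
qed

lemma mould_log_of_fps: "mould_log (mould_of_fps a) = mould_of_fps (fps_ln 1 oo (a - 1))"
proof
  fix w :: "'a list"
  define n where "n = length w"
  have minus_one: "(\<lambda>u. mould_of_fps a u - mould_one u) = mould_of_fps (a - 1)"
    by (simp add: mould_one_eq_of_fps mould_of_fps_def fun_eq_iff)
  have "mould_log (mould_of_fps a) w
      = (\<Sum>j\<in>{1..n}. (-1) ^ (j + 1) / of_nat j * fps_nth ((a - 1) ^ j) n)"
    unfolding mould_log_def minus_one mould_pow_of_fps by (simp only: mould_of_fps_def n_def)
  also have "\<dots> = (\<Sum>j\<in>{1..n}. fps_nth (fps_ln 1) j * fps_nth ((a - 1) ^ j) n)"
  proof (rule sum.cong[OF refl])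
    fix j assume "j \<in> {1..n}"
    then obtain i where "j = Suc i" by (cases j) auto
    then show "(-1) ^ (j + 1) / of_nat j * fps_nth ((a - 1) ^ j) n
        = fps_nth (fps_ln 1) j * fps_nth ((a - 1) ^ j) n"
      by (simp add: fps_ln_nth)
  qed
  also have "\<dots> = (\<Sum>j = 0..n. fps_nth (fps_ln 1) j * fps_nth ((a - 1) ^ j) n)"
    by (simp add: sum.atLeast_Suc_atMost[of 0 n])
  finally show "mould_log (mould_of_fps a) w = mould_of_fps (fps_ln 1 oo (a - 1)) w"
    by (simp only: mould_of_fps_def fps_compose_nth n_def)
qed

lemma fps_exp_compose_ln: "fps_exp (1 :: 'a :: field_char_0) oo fps_ln 1 = 1 + fps_X"
proof -
  have X: "(fps_exp (1 :: 'a) - 1) oo fps_ln 1 = fps_X"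
    using fps_inv_fps_exp_compose(2)[of "1 :: 'a"] fps_ln_fps_exp_inv[of "1 :: 'a"] by simp
  have "fps_exp (1 :: 'a) oo fps_ln 1 = ((fps_exp 1 - 1) + 1) oo fps_ln 1"
    by simp
  also have "\<dots> = fps_X + 1"
    by (simp only: fps_compose_add_distrib X fps_compose_1)
  finally show ?thesis by simp
qed

(* mould_trim_gen lam M is the mould of the generator V of a trimming step applied to F_lin o M.
   Then exp V o F_lin o M o exp (-V) = F_lin o (F_lin^-1 o exp V o F_lin) o M o exp (-V), and
   conjugation by F_lin multiplies the coefficient of a word w by e^(-lambda . deg w). *)
definition mould_trim_gen ::
    "('n::finite \<Rightarrow> complex) \<Rightarrow> (('n \<Rightarrow> int) list \<Rightarrow> complex) \<Rightarrow> ('n \<Rightarrow> int) list \<Rightarrow> complex"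
  where
  "mould_trim_gen lam M w =
     (if exp (ldeg lam (word_deg w)) \<noteq> 1
      then mould_log M w / (1 - exp (ldeg lam (word_deg w))) else 0)"

definition mould_trim ::
    "('n::finite \<Rightarrow> complex) \<Rightarrow> (('n \<Rightarrow> int) list \<Rightarrow> complex) \<Rightarrow> ('n \<Rightarrow> int) list \<Rightarrow> complex"
  where
  "mould_trim lam M =
     mould_mult (\<lambda>w. exp (- ldeg lam (word_deg w)) * mould_exp (mould_trim_gen lam M) w)
       (mould_mult M (mould_exp (\<lambda>w. - mould_trim_gen lam M w)))"

lemma mould_trim_Nil: "M [] = 1 \<Longrightarrow> mould_trim lam M [] = 1"
  by (simp add: mould_trim_def ldeg_def)

lemma funpow_mould_trim_Nil: "M [] = 1 \<Longrightarrow> (mould_trim lam ^^ r) M [] = 1"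
  by (induction r) (simp_all add: mould_trim_Nil)

section \<open>Mould expansions over a graded family of operators\<close>

locale graded_ops =
  fixes Op :: "('n::finite \<Rightarrow> int) \<Rightarrow> 'n mop"
  assumes homogeneous_Op: "homogeneous (Op n) n"
    and raises_deg_Op: "raises_deg (Op n) 1"
begin

lemma homogeneous_wop_Op: "homogeneous (wop Op w) (word_deg w)"
  by (rule homogeneous_wop[OF homogeneous_Op])

lemma raises_deg_wop_Op: "raises_deg (wop Op w) (length w)"
  by (rule raises_deg_wop[OF homogeneous_Op raises_deg_Op])

lemma wop_support: "wop Op w \<phi> k \<noteq> 0 \<Longrightarrow> w \<in> bounded_words (mdeg k)"
proof (induction w arbitrary: k)
  case Nil
  then show ?case by (simp add: bounded_words_def)
next
  case (Cons n w)
  define q where "q = exp_sub k n"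
  from Cons.prems have "exp_le n k" "hcoeff (Op n) n k \<noteq> 0" "wop Op w \<phi> q \<noteq> 0"
    by (auto simp: homogeneous_apply[OF homogeneous_Op, of n] q_def split: if_splits)
  then have le: "exp_le n k" and deg: "mdeg q + 1 \<le> mdeg k" and w: "w \<in> bounded_words (mdeg q)"
    using raises_degD[OF raises_deg_Op] Cons.IH by (auto simp: hcoeff_def q_def)
  have "\<bar>n i\<bar> \<le> int (mdeg k)" for i
    using of_nat_exp_sub[OF le, of i] le_mdeg[of k i] le_mdeg[of q i] deg
    unfolding q_def by linarith
  moreover have "w \<in> bounded_words (mdeg k)" "length w < mdeg k"
    using w bounded_words_mono[of "mdeg q" "mdeg k"] deg by (auto simp: bounded_words_def)
  ultimately show ?case by (auto simp: bounded_words_def)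
qed

lemma mould_sum_eq_sum:
  assumes "mdeg k \<le> K"
  shows "mould_sum M Op A \<phi> k = (\<Sum>w \<in> lists A \<inter> bounded_words K. M w * wop Op w \<phi> k)"
  unfolding mould_sum_def
proof (rule infsum_eq_sum_neutral)
  show "finite (lists A \<inter> bounded_words K)" using finite_bounded_words by blast
  fix w assume "w \<in> lists A - lists A \<inter> bounded_words K"
  then have "w \<notin> bounded_words (mdeg k)" using bounded_words_mono[OF assms] by blast
  then show "M w * wop Op w \<phi> k = 0" using wop_support by auto
qed auto

lemmas mould_sum_apply = mould_sum_eq_sum[OF order_refl]

lemma wop_mould_sum:
  "wop Op u (mould_sum N Op A \<phi>) k
     = (\<Sum>v \<in> lists A \<inter> bounded_words (mdeg k). N v * wop Op (u @ v) \<phi> k)"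
proof -
  let ?W = "lists A \<inter> bounded_words (mdeg k)"
  have "wop Op u (mould_sum N Op A \<phi>) k = wop Op u (\<lambda>l. \<Sum>v\<in>?W. N v * wop Op v \<phi> l) k"
    by (rule homogeneous_apply_cong[OF homogeneous_wop_Op raises_deg_wop_Op])
      (simp add: mould_sum_eq_sum)
  also have "\<dots> = (\<Sum>v\<in>?W. N v * wop Op u (wop Op v \<phi>) k)"
    by (rule homogeneous_linear[OF homogeneous_wop_Op])
  finally show ?thesis by (simp add: wop_append)
qed

lemma mould_sum_mult:
  "mould_sum M Op A \<circ> mould_sum N Op A = mould_sum (mould_mult M N) Op A" (is "?L = ?R")
proof (intro ext)
  fix \<phi> :: "'n mser" and k :: "'n \<Rightarrow> nat"
  let ?W = "lists A \<inter> bounded_words (mdeg k)"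
  let ?g = "\<lambda>u v. M u * N v * wop Op (u @ v) \<phi> k"
  have fin: "finite ?W" using finite_bounded_words by blast
  have "?L \<phi> k = (\<Sum>u\<in>?W. \<Sum>v\<in>?W. ?g u v)"
    by (simp add: mould_sum_apply wop_mould_sum sum_distrib_left mult.assoc)
  also have "\<dots> = (\<Sum>(u, v) \<in> ?W \<times> ?W. ?g u v)"
    by (simp add: sum.cartesian_product)
  also have "\<dots> = (\<Sum>(u, v) \<in> {(u, v). u @ v \<in> ?W}. ?g u v)"
  proof (rule sum.mono_neutral_right)
    show "{(u, v). u @ v \<in> ?W} \<subseteq> ?W \<times> ?W"
      using append_in_bounded_words by auto
    show "\<forall>p \<in> ?W \<times> ?W - {(u, v). u @ v \<in> ?W}. (case p of (u, v) \<Rightarrow> ?g u v) = 0"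
      using wop_support by fastforce
  qed (use fin in auto)
  also have "\<dots> = (\<Sum>w\<in>?W. \<Sum>i\<le>length w. ?g (take i w) (drop i w))"
    using fin by (rule sum_append_split)
  also have "\<dots> = ?R \<phi> k"
    by (simp add: mould_sum_apply mould_mult_def sum_distrib_right)
  finally show "?L \<phi> k = ?R \<phi> k" .
qed

lemma mould_sum_mult_apply:
  "mould_sum M Op A (mould_sum N Op A \<psi>) = mould_sum (mould_mult M N) Op A \<psi>"
  using mould_sum_mult[of M A N] by (metis comp_apply)

lemma mould_sum_one: "mould_sum mould_one Op A = id"
proof (intro ext)
  fix \<phi> :: "'n mser" and k :: "'n \<Rightarrow> nat"
  let ?W = "lists A \<inter> bounded_words (mdeg k)"
  have "mould_sum mould_one Op A \<phi> k = (\<Sum>w\<in>?W. if w = [] then wop Op w \<phi> k else 0)"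
    by (auto simp: mould_sum_apply mould_one_def intro!: sum.cong)
  also have "\<dots> = wop Op [] \<phi> k"
  proof -
    have "finite ?W" "[] \<in> ?W" using finite_bounded_words by (auto simp: bounded_words_def)
    then show ?thesis by simp
  qed
  finally show "mould_sum mould_one Op A \<phi> k = id \<phi> k" by simp
qed

lemma mould_sum_pow: "mould_sum M Op A ^^ j = mould_sum (mould_pow M j) Op A"
  by (induction j) (simp_all add: mould_sum_one mould_sum_mult)

lemma mould_sum_lincomb:
  "(\<lambda>\<phi> k. a * mould_sum M Op A \<phi> k + b * mould_sum N Op A \<phi> k)
     = mould_sum (\<lambda>w. a * M w + b * N w) Op A"
  by (intro ext) (simp add: mould_sum_apply sum_distrib_left sum.distrib algebra_simps)

lemma mould_sum_power_series:
  assumes "M [] = 0"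
  shows "(\<Sum>\<^sub>\<infinity>j\<in>J. c j * (mould_sum M Op A ^^ j) \<phi> k)
           = mould_sum (\<lambda>w. \<Sum>j \<in> J \<inter> {..length w}. c j * mould_pow M j w) Op A \<phi> k"
proof -
  define W where "W = lists A \<inter> bounded_words (mdeg k)"
  have fin: "finite W" unfolding W_def using finite_bounded_words by blast
  have len: "length w \<le> mdeg k" if "w \<in> W" for w
    using that by (simp add: W_def bounded_words_def)
  have pow: "(mould_sum M Op A ^^ j) \<phi> k = (\<Sum>w\<in>W. mould_pow M j w * wop Op w \<phi> k)" for j
    by (simp add: mould_sum_pow mould_sum_apply W_def)
  have "(\<Sum>\<^sub>\<infinity>j\<in>J. c j * (mould_sum M Op A ^^ j) \<phi> k)
      = (\<Sum>j \<in> J \<inter> {..mdeg k}. c j * (mould_sum M Op A ^^ j) \<phi> k)"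
  proof (rule infsum_eq_sum_neutral)
    fix j assume "j \<in> J - J \<inter> {..mdeg k}"
    then have "length w < j" if "w \<in> W" for w using len[OF that] by auto
    then show "c j * (mould_sum M Op A ^^ j) \<phi> k = 0"
      by (simp add: pow mould_pow_eq_0[of M, OF assms])
  qed auto
  also have "\<dots> = (\<Sum>w\<in>W. \<Sum>j \<in> J \<inter> {..mdeg k}. c j * mould_pow M j w * wop Op w \<phi> k)"
    by (simp add: pow sum_distrib_left mult.assoc sum.swap[of _ _ W])
  also have "\<dots> = (\<Sum>w\<in>W. (\<Sum>j \<in> J \<inter> {..length w}. c j * mould_pow M j w) * wop Op w \<phi> k)"
  proof (rule sum.cong[OF refl])
    fix w assume "w \<in> W"
    then have "length w \<le> mdeg k" by (rule len)
    then have "J \<inter> {..length w} \<subseteq> J \<inter> {..mdeg k}" by auto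
    then have "(\<Sum>j \<in> J \<inter> {..mdeg k}. c j * mould_pow M j w * wop Op w \<phi> k)
        = (\<Sum>j \<in> J \<inter> {..length w}. c j * mould_pow M j w * wop Op w \<phi> k)"
      by (intro sum.mono_neutral_right) (auto, metis assms mould_pow_eq_0 not_le)
    then show "(\<Sum>j \<in> J \<inter> {..mdeg k}. c j * mould_pow M j w * wop Op w \<phi> k)
        = (\<Sum>j \<in> J \<inter> {..length w}. c j * mould_pow M j w) * wop Op w \<phi> k"
      by (simp add: sum_distrib_right)
  qed
  also have "\<dots> = mould_sum (\<lambda>w. \<Sum>j \<in> J \<inter> {..length w}. c j * mould_pow M j w) Op A \<phi> k"
    by (simp add: mould_sum_apply W_def)
  finally show ?thesis .
qed

lemma mexp_mould_sum:
  assumes "M [] = 0"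
  shows "mexp (mould_sum M Op A) = mould_sum (mould_exp M) Op A"
proof (intro ext)
  fix \<phi> :: "'n mser" and k :: "'n \<Rightarrow> nat"
  have "mexp (mould_sum M Op A) \<phi> k
      = (\<Sum>\<^sub>\<infinity>j\<in>UNIV. 1 / fact j * (mould_sum M Op A ^^ j) \<phi> k)"
    by (simp add: mexp_def)
  also have "\<dots> = mould_sum (mould_exp M) Op A \<phi> k"
    unfolding mould_sum_power_series[of M, OF assms] by (simp add: mould_exp_def[abs_def])
  finally show "mexp (mould_sum M Op A) \<phi> k = mould_sum (mould_exp M) Op A \<phi> k" .
qed

lemma mould_sum_minus_id:
  "(\<lambda>\<psi> l. mould_sum M Op A \<psi> l - \<psi> l) = mould_sum (\<lambda>u. M u - mould_one u) Op A"
  using mould_sum_lincomb[where a = 1 and M = M and b = "-1" and N = mould_one]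
  by (simp add: mould_sum_one)

lemma mlog_mould_sum:
  assumes "M [] = 1"
  shows "mlog (mould_sum M Op A) = mould_sum (mould_log M) Op A"
proof (intro ext)
  fix \<phi> :: "'n mser" and k :: "'n \<Rightarrow> nat"
  define M' where "M' = (\<lambda>u. M u - mould_one u)"
  have "M' [] = 0" using assms by (simp add: M'_def mould_one_def)
  have "mlog (mould_sum M Op A) \<phi> k
      = (\<Sum>\<^sub>\<infinity>j\<in>{1..}. (-1) ^ (j + 1) / of_nat j * (mould_sum M' Op A ^^ j) \<phi> k)"
    by (simp only: mlog_def mould_sum_minus_id M'_def)
  also have "\<dots> = mould_sum (mould_log M) Op A \<phi> k"
    unfolding mould_sum_power_series[of M', OF \<open>M' [] = 0\<close>]
    by (simp only: mould_log_def[abs_def] atLeastAtMost_def M'_def)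
  finally show "mlog (mould_sum M Op A) \<phi> k = mould_sum (mould_log M) Op A \<phi> k" .
qed

lemma hcomp_mould_sum:
  "hcomp (mould_sum M Op A) m = mould_sum (\<lambda>w. if word_deg w = m then M w else 0) Op A"
  (is "?L = ?R")
proof (intro ext)
  fix \<phi> :: "'n mser" and k :: "'n \<Rightarrow> nat"
  let ?W = "lists A \<inter> bounded_words (mdeg k)"
  have word: "wop Op w (mono (exp_sub k m)) k * \<phi> (exp_sub k m)
      = (if word_deg w = m then wop Op w \<phi> k else 0)" if "exp_le m k" for w
    using exp_sub_inject[OF _ that, of "word_deg w"] that
    by (auto simp: homogeneous_apply[OF homogeneous_wop_Op, of w] mono_apply)
  show "?L \<phi> k = ?R \<phi> k"
  proof (cases "exp_le m k")
    case True
    then show ?thesis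
      by (auto simp: hcomp_apply hcoeff_def mould_sum_apply sum_distrib_right mult.assoc word
          intro!: sum.cong)
  next
    case False
    then show ?thesis
      by (auto simp: hcomp_apply mould_sum_apply homogeneous_apply[OF homogeneous_wop_Op]
          intro!: sum.neutral)
  qed
qed

lemma opsum_mould_sum_components:
  "opsum (\<lambda>m \<phi> k. mould_sum (\<lambda>w. if word_deg w = m then M w else 0) Op A \<phi> k / d m) S
     = mould_sum (\<lambda>w. if word_deg w \<in> S then M w / d (word_deg w) else 0) Op A"
  (is "?L = ?R")
proof (intro ext)
  fix \<phi> :: "'n mser" and k :: "'n \<Rightarrow> nat"
  define W where "W = lists A \<inter> bounded_words (mdeg k)"
  have fin: "finite W" unfolding W_def using finite_bounded_words by blast
  let ?t = "\<lambda>m w. if word_deg w = m then M w / d m * wop Op w \<phi> k else 0"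
  have "?L \<phi> k = (\<Sum>\<^sub>\<infinity>m\<in>S. \<Sum>w\<in>W. ?t m w)"
    by (auto simp: opsum_def mould_sum_apply W_def sum_divide_distrib intro!: infsum_cong sum.cong)
  also have "\<dots> = (\<Sum>m \<in> S \<inter> word_deg ` W. \<Sum>w\<in>W. ?t m w)"
    by (rule infsum_eq_sum_neutral) (auto simp: fin intro!: sum.neutral)
  also have "\<dots> = (\<Sum>w\<in>W. \<Sum>m \<in> S \<inter> word_deg ` W. ?t m w)"
    by (rule sum.swap)
  also have "\<dots> = (\<Sum>w\<in>W. (if word_deg w \<in> S then M w / d (word_deg w) else 0) * wop Op w \<phi> k)"
    using fin by (intro sum.cong) (auto simp: sum.delta')
  also have "\<dots> = ?R \<phi> k"
    by (simp add: mould_sum_apply W_def)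
  finally show "?L \<phi> k = ?R \<phi> k" .
qed

lemma Flin_inv_mould_sum_Flin:
  "(\<lambda>\<phi>. Flin_inv lam (mould_sum M Op A (Flin lam \<phi>)))
     = mould_sum (\<lambda>w. exp (- ldeg lam (word_deg w)) * M w) Op A" (is "_ = ?R")
proof (intro ext)
  fix \<phi> :: "'n mser" and k :: "'n \<Rightarrow> nat"
  have word: "exp (- ldot lam k) * wop Op w (Flin lam \<phi>) k
      = exp (- ldeg lam (word_deg w)) * wop Op w \<phi> k" for w
  proof (cases "exp_le (word_deg w) k")
    case True
    then have "exp (- ldot lam k) * exp (ldot lam (exp_sub k (word_deg w)))
        = exp (- ldeg lam (word_deg w))"
      by (simp add: ldot_exp_sub flip: exp_add)
    then show ?thesis
      by (simp add: homogeneous_apply[OF homogeneous_wop_Op, of w] Flin_def True mult_ac)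
  qed (simp add: homogeneous_apply[OF homogeneous_wop_Op, of w])
  show "Flin_inv lam (mould_sum M Op A (Flin lam \<phi>)) k = ?R \<phi> k"
    unfolding Flin_inv_def mould_sum_apply sum_distrib_left
    by (rule sum.cong[OF refl]) (metis word mult.assoc mult.left_commute)
qed

lemma mould_sum_length_one:
  "mould_sum (\<lambda>w. if length w = 1 then 1 else 0) Op A = opsum Op A" (is "?L = ?R")
proof (intro ext)
  fix \<phi> :: "'n mser" and k :: "'n \<Rightarrow> nat"
  have "?L \<phi> k = (\<Sum>\<^sub>\<infinity>w \<in> (\<lambda>n. [n]) ` A. wop Op w \<phi> k)"
    unfolding mould_sum_def by (rule infsum_cong_neutral) (auto simp: length_Suc_conv)
  also have "\<dots> = ?R \<phi> k"
    by (simp add: infsum_reindex inj_on_def opsum_def comp_def)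
  finally show "?L \<phi> k = ?R \<phi> k" .
qed

lemma raises_deg_mould_sum:
  assumes "M [] = 0"
  shows "raises_deg (mould_sum M Op A) 1"
  unfolding raises_deg_def
proof (intro allI impI)
  fix p k
  assume "mould_sum M Op A (mono p) k \<noteq> 0"
  then have "(\<Sum>w \<in> lists A \<inter> bounded_words (mdeg k). M w * wop Op w (mono p) k) \<noteq> 0"
    by (simp add: mould_sum_apply)
  then obtain w where w: "M w * wop Op w (mono p) k \<noteq> 0"
    by (meson sum.not_neutral_contains_not_neutral)
  then have "mdeg p + length w \<le> mdeg k"
    by (intro raises_degD[OF raises_deg_wop_Op]) simp
  moreover have "w \<noteq> []" using w assms by auto
  ultimately show "mdeg p + 1 \<le> mdeg k" by (cases w) auto
qed

lemma Dcomp_Flin_comp_mould_sum: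
  assumes "M [] = 1"
  shows "Dcomp lam (Flin lam \<circ> mould_sum M Op A) m
           = mould_sum (\<lambda>w. if word_deg w = m then mould_log M w else 0) Op A"
proof -
  have "(\<lambda>\<phi>. Flin_inv lam ((Flin lam \<circ> mould_sum M Op A) \<phi>)) = mould_sum M Op A"
    by simp
  then show ?thesis
    by (simp only: Dcomp_def mlog_mould_sum[of M, OF assms] hcomp_mould_sum)
qed

lemma opsum_Dcomp_Flin_comp_mould_sum:
  assumes "M [] = 1"
  shows "opsum (\<lambda>m \<phi> k. Dcomp lam (Flin lam \<circ> mould_sum M Op A) m \<phi> k / (1 - exp (ldeg lam m)))
           {m. exp (ldeg lam m) \<noteq> 1}
         = mould_sum (mould_trim_gen lam M) Op A"
  by (simp only: Dcomp_Flin_comp_mould_sum[where M = M, OF assms] opsum_mould_sum_components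
      mould_trim_gen_def[abs_def] mem_Collect_eq)

lemma mexp_mould_sum_Flin:
  assumes "V [] = 0"
  shows "mexp (mould_sum V Op A) (Flin lam \<psi>)
           = Flin lam (mould_sum (\<lambda>w. exp (- ldeg lam (word_deg w)) * mould_exp V w) Op A \<psi>)"
proof -
  have "Flin_inv lam (mould_sum (mould_exp V) Op A (Flin lam \<psi>))
      = mould_sum (\<lambda>w. exp (- ldeg lam (word_deg w)) * mould_exp V w) Op A \<psi>"
    using Flin_inv_mould_sum_Flin[of lam "mould_exp V"] by metis
  then show ?thesis
    unfolding mexp_mould_sum[of V, OF assms] by (metis Flin_Flin_inv)
qed

lemma Semtrim_Suc_mould_sum:
  assumes G: "Semtrim lam h i = Flin lam \<circ> mould_sum M Op A" and M: "M [] = 1"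
  shows "Semtrim lam h (Suc i) = Flin lam \<circ> mould_sum (mould_trim lam M) Op A"
proof -
  let ?V = "mould_trim_gen lam M"
  have V: "?V [] = 0" and minus_V: "(\<lambda>w. - ?V w) [] = 0"
    by (simp_all add: mould_trim_gen_def)
  have "(\<lambda>\<phi> k. - mould_sum ?V Op A \<phi> k) = mould_sum (\<lambda>w. - ?V w) Op A"
    using mould_sum_lincomb[where a = "-1" and M = ?V and b = 0] by simp
  then have step: "Semtrim lam h (Suc i)
      = mexp (mould_sum ?V Op A) \<circ> (Flin lam \<circ> mould_sum M Op A)
          \<circ> mexp (mould_sum (\<lambda>w. - ?V w) Op A)"
    by (simp only: Semtrim.simps Let_def G opsum_Dcomp_Flin_comp_mould_sum[where M = M, OF M])
  show ?thesis
    unfolding step mould_trim_def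
    by (intro ext) (simp only: comp_apply mexp_mould_sum_Flin[where V = ?V, OF V]
        mexp_mould_sum[of "\<lambda>w. - ?V w", OF minus_V] mould_sum_mult_apply)
qed

lemma Semtrim_mould_sum:
  assumes "Fsub lam h = Flin lam \<circ> mould_sum M Op A" "M [] = 1"
  shows "Semtrim lam h r = Flin lam \<circ> mould_sum ((mould_trim lam ^^ r) M) Op A"
proof (induction r)
  case 0
  then show ?case using assms(1) by simp
next
  case (Suc r)
  then show ?case
    using Semtrim_Suc_mould_sum[OF Suc funpow_mould_trim_Nil[of M, OF assms(2)]]
    by (simp del: Semtrim.simps)
qed

lemma opsum_hcomp_mould_sum: "opsum (hcomp (mould_sum M Op A)) UNIV = mould_sum M Op A"
proof -
  have "hcomp (mould_sum M Op A) = (\<lambda>m. mould_sum (\<lambda>w. if word_deg w = m then M w else 0) Op A)"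
    by (intro ext) (simp only: hcomp_mould_sum)
  then show ?thesis
    using opsum_mould_sum_components[of M A "\<lambda>_. 1" UNIV] by simp
qed

end

section \<open>The substitution operator\<close>

definition factor_slots :: "('n::finite \<Rightarrow> nat) \<Rightarrow> ('n \<times> nat) set" where
  "factor_slots p = Sigma UNIV (\<lambda>j. {..< p j})"

definition factor_choices :: "('n::finite \<Rightarrow> nat) \<Rightarrow> ('n \<Rightarrow> nat) \<Rightarrow> ('n \<times> nat \<Rightarrow> 'n \<Rightarrow> nat) set" where
  "factor_choices p k =
     {a \<in> PiE (factor_slots p) (\<lambda>_. {x. x \<le> k}). \<forall>i. (\<Sum>q \<in> factor_slots p. a q i) = k i}"

definition linear_choice :: "('n::finite \<Rightarrow> nat) \<Rightarrow> 'n \<times> nat \<Rightarrow> 'n \<Rightarrow> nat" where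
  "linear_choice p = restrict (\<lambda>q. unitv (fst q)) (factor_slots p)"

lemma mpow_coeff_eq_sum_factor_choices:
  "mpow_coeff f p k = (\<Sum>a \<in> factor_choices p k. \<Prod>q \<in> factor_slots p. f (fst q) (a q))"
  by (simp add: mpow_coeff_def factor_slots_def factor_choices_def Let_def)

lemma finite_factor_slots: "finite (factor_slots p)"
  by (simp add: factor_slots_def)

lemma card_factor_slots: "card (factor_slots p) = mdeg p"
  by (simp add: factor_slots_def mdeg_def)

lemma finite_factor_choices: "finite (factor_choices p k)"
proof -
  have "{x. x \<le> k} \<subseteq> PiE UNIV (\<lambda>i. {..k i})"
    by (auto simp: le_fun_def)
  then have "finite {x. x \<le> k}"
    by (rule finite_subset) (simp add: finite_PiE)
  then have "finite (PiE (factor_slots p) (\<lambda>_. {x. x \<le> k}))"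
    by (simp add: finite_PiE finite_factor_slots)
  then show ?thesis
    unfolding factor_choices_def by (rule finite_subset[rotated]) blast
qed

lemma mdeg_unitv: "mdeg (unitv j :: 'n::finite \<Rightarrow> nat) = 1"
  by (simp add: mdeg_def unitv_def)

lemma sum_mdeg_factor_choice:
  assumes "a \<in> factor_choices p k"
  shows "(\<Sum>q \<in> factor_slots p. mdeg (a q)) = mdeg k"
proof -
  have "(\<Sum>q \<in> factor_slots p. mdeg (a q)) = (\<Sum>i\<in>UNIV. \<Sum>q \<in> factor_slots p. a q i)"
    unfolding mdeg_def by (rule sum.swap)
  then show ?thesis using assms by (simp add: factor_choices_def mdeg_def)
qed

lemma sum_linear_choice: "(\<Sum>q \<in> factor_slots p. linear_choice p q i) = p i"
proof -
  have "(\<Sum>q \<in> factor_slots p. linear_choice p q i) = (\<Sum>(j, t) \<in> factor_slots p. unitv j i)"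
    by (intro sum.cong) (auto simp: linear_choice_def)
  also have "\<dots> = (\<Sum>j\<in>UNIV. \<Sum>t < p j. unitv j i)"
    unfolding factor_slots_def by (rule sum.Sigma[symmetric]) auto
  also have "\<dots> = (\<Sum>j\<in>UNIV. if j = i then p j else 0)"
    by (intro sum.cong) (auto simp: unitv_def)
  finally show ?thesis by simp
qed

lemma linear_choice_in_factor_choices: "linear_choice k \<in> factor_choices k k"
proof -
  have "linear_choice k \<in> PiE (factor_slots k) (\<lambda>_. {x. x \<le> k})"
    unfolding linear_choice_def
    by (rule restrict_PiE_iff[THEN iffD2]) (auto simp: factor_slots_def unitv_def le_fun_def)
  then show ?thesis by (simp add: factor_choices_def sum_linear_choice)
qed

lemma linear_choice_in_factor_choicesD: "linear_choice p \<in> factor_choices p k \<Longrightarrow> p = k"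
  by (auto simp: factor_choices_def sum_linear_choice fun_eq_iff)

lemma factor_choice_eq_linear_choice:
  assumes f: "\<And>j x. f j x \<noteq> 0 \<Longrightarrow> x = unitv j \<or> 2 \<le> mdeg x"
    and deg: "mdeg p = mdeg k" and a: "a \<in> factor_choices p k"
    and nz: "\<forall>q \<in> factor_slots p. f (fst q) (a q) \<noteq> 0"
  shows "a = linear_choice p"
proof
  fix q
  show "a q = linear_choice p q"
  proof (cases "q \<in> factor_slots p")
    case False
    have "a \<in> PiE (factor_slots p) (\<lambda>_. {x. x \<le> k})"
      using a unfolding factor_choices_def by blast
    then have "a q = undefined" using False by (rule PiE_arb)
    then show ?thesis using False by (simp add: linear_choice_def)
  next
    case True
    have choice: "a q' = unitv (fst q') \<or> 2 \<le> mdeg (a q')" if "q' \<in> factor_slots p" for q'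
      using f nz that by blast
    have ge1: "1 \<le> mdeg (a q')" if "q' \<in> factor_slots p" for q'
      using choice[OF that] mdeg_unitv[of "fst q'"] by auto
    have "(\<Sum>q \<in> factor_slots p. 1) = (\<Sum>q \<in> factor_slots p. mdeg (a q))"
      using sum_mdeg_factor_choice[OF a] deg card_factor_slots[of p] by simp
    then have "1 = mdeg (a q)"
      by (rule sum_mono_inv[OF _ ge1 True finite_factor_slots])
    then have "a q = unitv (fst q)" using choice[OF True] by linarith
    then show ?thesis using True by (simp add: linear_choice_def)
  qed
qed

lemma mpow_coeff_eq_deg:
  assumes f: "\<And>j x. f j x \<noteq> 0 \<Longrightarrow> x = unitv j \<or> 2 \<le> mdeg x" and deg: "mdeg p = mdeg k"
  shows "mpow_coeff f p k = (if p = k then \<Prod>j\<in>UNIV. f j (unitv j) ^ k j else 0)"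
proof -
  let ?P = "\<lambda>a. \<Prod>q \<in> factor_slots p. f (fst q) (a q)"
  have vanish: "?P a = 0" if "a \<in> factor_choices p k" "a \<noteq> linear_choice p" for a
  proof (rule ccontr)
    assume "?P a \<noteq> 0"
    then have "\<forall>q \<in> factor_slots p. f (fst q) (a q) \<noteq> 0"
      by (simp add: prod_zero_iff[OF finite_factor_slots])
    then show False using factor_choice_eq_linear_choice[OF f deg that(1)] that(2) by blast
  qed
  show ?thesis
  proof (cases "p = k")
    case True
    have "mpow_coeff f p k = (\<Sum>a \<in> {linear_choice p}. ?P a)"
      unfolding mpow_coeff_eq_sum_factor_choices
      using True vanish linear_choice_in_factor_choices[of k]
      by (intro sum.mono_neutral_right finite_factor_choices) auto
    also have "\<dots> = ?P (linear_choice p)"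
      by simp
    also have "\<dots> = (\<Prod>(j, t) \<in> factor_slots p. f j (unitv j))"
      by (simp add: linear_choice_def split_def)
    also have "\<dots> = (\<Prod>j\<in>UNIV. \<Prod>t < p j. f j (unitv j))"
      unfolding factor_slots_def by (rule prod.Sigma[symmetric]) auto
    finally show ?thesis using True by simp
  next
    case False
    then have "linear_choice p \<notin> factor_choices p k"
      using linear_choice_in_factor_choicesD by blast
    then show ?thesis
      unfolding mpow_coeff_eq_sum_factor_choices using False vanish by (auto intro!: sum.neutral)
  qed
qed

lemma diffeo_nonzero_coeff:
  assumes "\<forall>j m. mdeg m < 2 \<longrightarrow> h j m = 0" "diffeo lam h j x \<noteq> 0"
  shows "x = unitv j \<or> 2 \<le> mdeg x"
  using assms by (auto simp: diffeo_def split: if_splits)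

lemma diffeo_unitv:
  assumes "\<forall>j m. mdeg m < 2 \<longrightarrow> h j m = 0"
  shows "diffeo lam h j (unitv j) = exp (lam j)"
  using assms mdeg_unitv[of j] by (simp add: diffeo_def)

lemma mpow_coeff_diffeo_eq_deg:
  assumes h: "\<forall>j m. mdeg m < 2 \<longrightarrow> h j m = 0" and deg: "mdeg p = mdeg k"
  shows "mpow_coeff (diffeo lam h) p k = (if p = k then exp (ldot lam k) else 0)"
proof -
  have "(\<Prod>j\<in>UNIV. exp (lam j) ^ k j) = exp (ldot lam k)"
    by (simp add: ldot_def exp_sum exp_of_nat2_mult)
  then show ?thesis
    using mpow_coeff_eq_deg[OF diffeo_nonzero_coeff[OF h] deg] by (simp add: diffeo_unitv[OF h])
qed

lemma Fsub_mono_apply: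
  "Fsub lam h (mono p) k = (if mdeg p \<le> mdeg k then mpow_coeff (diffeo lam h) p k else 0)"
proof -
  have "Fsub lam h (mono p) k
      = (\<Sum>m \<in> {m. mdeg m \<le> mdeg k}. if m = p then mpow_coeff (diffeo lam h) m k else 0)"
    unfolding Fsub_def subst_def by (rule sum.cong) (auto simp: mono_apply)
  then show ?thesis by (simp add: finite_mdeg_le)
qed

lemma Fsub_eq_sum_mono:
  "Fsub lam h \<phi> k = (\<Sum>p \<in> {p. mdeg p \<le> mdeg k}. Fsub lam h (mono p) k * \<phi> p)"
proof -
  have "Fsub lam h \<phi> k = (\<Sum>p \<in> {p. mdeg p \<le> mdeg k}. \<phi> p * mpow_coeff (diffeo lam h) p k)"
    by (simp add: Fsub_def subst_def)
  also have "\<dots> = (\<Sum>p \<in> {p. mdeg p \<le> mdeg k}. Fsub lam h (mono p) k * \<phi> p)"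
    by (rule sum.cong) (auto simp: Fsub_mono_apply)
  finally show ?thesis .
qed

definition Bsum :: "('n::finite \<Rightarrow> complex) \<Rightarrow> ('n \<Rightarrow> 'n mser) \<Rightarrow> 'n mop" where
  "Bsum lam h = (\<lambda>\<phi> k. Flin_inv lam (Fsub lam h \<phi>) k - \<phi> k)"

lemma Bop_eq_hcomp_Bsum: "Bop lam h n = hcomp (Bsum lam h) n"
  by (simp add: Bop_def Bsum_def)

lemma Bsum_apply: "Bsum lam h \<phi> k = exp (- ldot lam k) * Fsub lam h \<phi> k - \<phi> k"
  by (simp add: Bsum_def Flin_inv_def)

lemma raises_deg_Bsum:
  assumes h: "\<forall>j m. mdeg m < 2 \<longrightarrow> h j m = 0"
  shows "raises_deg (Bsum lam h) 1"
  unfolding raises_deg_def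
proof (intro allI impI)
  fix p k
  assume nz: "Bsum lam h (mono p) k \<noteq> 0"
  show "mdeg p + 1 \<le> mdeg k"
  proof (rule ccontr)
    assume "\<not> mdeg p + 1 \<le> mdeg k"
    then consider "mdeg p = mdeg k" | "mdeg k < mdeg p" by linarith
    then have "Bsum lam h (mono p) k = 0"
    proof cases
      case 1
      then show ?thesis
        by (simp add: Bsum_apply Fsub_mono_apply mpow_coeff_diffeo_eq_deg[OF h] mono_apply
            exp_minus)
    next
      case 2
      then have "k \<noteq> p" by auto
      then show ?thesis using 2 by (simp add: Bsum_apply Fsub_mono_apply mono_apply)
    qed
    then show False using nz by simp
  qed
qed

lemma Bsum_eq_sum_mono:
  "Bsum lam h \<phi> k = (\<Sum>p \<in> {p. mdeg p \<le> mdeg k}. Bsum lam h (mono p) k * \<phi> p)"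
proof -
  have "(\<Sum>p \<in> {p. mdeg p \<le> mdeg k}. mono p k * \<phi> p)
      = (\<Sum>p \<in> {p. mdeg p \<le> mdeg k}. if p = k then \<phi> p else 0)"
    by (rule sum.cong) (auto simp: mono_apply)
  also have "\<dots> = \<phi> k"
    by (simp add: finite_mdeg_le)
  finally have id: "(\<Sum>p \<in> {p. mdeg p \<le> mdeg k}. mono p k * \<phi> p) = \<phi> k" .
  then show ?thesis
    by (simp add: Bsum_apply Fsub_eq_sum_mono[of lam h \<phi>] algebra_simps sum_distrib_left
        sum_subtractf id)
qed

lemma infsum_hcomp:
  fixes T :: "'n::finite mop"
  assumes T: "\<And>\<psi> l. T \<psi> l = (\<Sum>p \<in> {p. mdeg p \<le> mdeg l}. T (mono p) l * \<psi> p)"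
  shows "(\<Sum>\<^sub>\<infinity>n. hcomp T n \<phi> k) = T \<phi> k"
proof -
  define S where "S = {p :: 'n \<Rightarrow> nat. mdeg p \<le> mdeg k}"
  define g where "g = (\<lambda>(p :: 'n \<Rightarrow> nat) i. int (k i) - int (p i))"
  have fin: "finite S" by (simp add: S_def finite_mdeg_le)
  have le: "exp_le (g p) k" and sub: "exp_sub k (g p) = p" for p
    by (simp_all add: exp_le_def exp_sub_def g_def)
  have "(\<Sum>\<^sub>\<infinity>n. hcomp T n \<phi> k) = (\<Sum>n \<in> g ` S. hcomp T n \<phi> k)"
  proof (rule infsum_eq_sum_neutral)
    fix n assume n: "n \<in> UNIV - g ` S"
    show "hcomp T n \<phi> k = 0"
    proof (cases "exp_le n k")
      case True
      then have "g (exp_sub k n) = n" by (auto simp: g_def of_nat_exp_sub)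
      then have "exp_sub k n \<notin> S" using n by (metis DiffD2 image_eqI)
      then have "T (mono (exp_sub k n)) k = 0"
        by (subst T) (auto simp: S_def mono_apply intro!: sum.neutral)
      then show ?thesis by (simp add: hcomp_apply hcoeff_def)
    qed (simp add: hcomp_apply)
  qed (use fin in auto)
  also have "\<dots> = (\<Sum>p\<in>S. hcomp T (g p) \<phi> k)"
    by (subst sum.reindex) (auto simp: inj_on_def g_def fun_eq_iff)
  also have "\<dots> = (\<Sum>p\<in>S. T (mono p) k * \<phi> p)"
    by (simp add: hcomp_apply hcoeff_def le sub)
  also have "\<dots> = T \<phi> k"
    unfolding S_def by (rule T[symmetric])
  finally show ?thesis .
qed

lemma graded_ops_Bop:
  assumes "\<forall>j m. mdeg m < 2 \<longrightarrow> h j m = 0"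
  shows "graded_ops (Bop lam h)"
  by unfold_locales
    (unfold Bop_eq_hcomp_Bsum, rule homogeneous_hcomp,
      rule raises_deg_hcomp[OF raises_deg_Bsum[OF assms]])

section \<open>Mould expansions of F and of its trimmed forms\<close>

lemma Fsub_eq_Flin_mould_sum_Bop:
  assumes h: "\<forall>j m. mdeg m < 2 \<longrightarrow> h j m = 0"
    and A: "\<forall>n. Bop lam h n \<noteq> (\<lambda>\<phi> k. 0) \<longrightarrow> n \<in> A"
  shows "Fsub lam h = Flin lam \<circ> mould_sum (mould_of_fps (1 + fps_X)) (Bop lam h) A"
proof -
  interpret graded_ops "Bop lam h" by (rule graded_ops_Bop[OF h])
  have opsum_Bop: "opsum (Bop lam h) A \<phi> k = Bsum lam h \<phi> k" for \<phi> k
  proof -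
    have "opsum (Bop lam h) A \<phi> k = (\<Sum>\<^sub>\<infinity>n. Bop lam h n \<phi> k)"
      unfolding opsum_def by (rule infsum_cong_neutral) (use A in \<open>auto simp: fun_eq_iff\<close>)
    also have "\<dots> = (\<Sum>\<^sub>\<infinity>n. hcomp (Bsum lam h) n \<phi> k)"
      by (simp add: Bop_eq_hcomp_Bsum)
    also have "\<dots> = Bsum lam h \<phi> k"
      by (rule infsum_hcomp[OF Bsum_eq_sum_mono])
    finally show ?thesis .
  qed
  have split: "mould_of_fps (1 + fps_X) = (\<lambda>w. 1 * mould_one w + 1 * mould_of_fps fps_X w)"
    by (simp add: mould_one_eq_of_fps mould_of_fps_def fun_eq_iff)
  have "mould_sum (mould_of_fps (1 + fps_X)) (Bop lam h) A
      = (\<lambda>\<phi> k. 1 * mould_sum mould_one (Bop lam h) A \<phi> k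
               + 1 * mould_sum (mould_of_fps fps_X) (Bop lam h) A \<phi> k)"
    unfolding split by (rule mould_sum_lincomb[symmetric])
  also have "\<dots> = (\<lambda>\<phi> k. \<phi> k + opsum (Bop lam h) A \<phi> k)"
    by (simp only: mould_sum_one mould_of_fps_X mould_sum_length_one mult_1 id_apply)
  also have "\<dots> = (\<lambda>\<phi>. Flin_inv lam (Fsub lam h \<phi>))"
    by (simp add: opsum_Bop Bsum_def)
  finally show ?thesis by (simp add: eq_Flin_comp_iff)
qed

(* The D_m do not depend on the alphabet A, so the B-expansion over all degrees can be used. *)
lemma Dop_eq_hcomp_mould_sum_Bop:
  assumes h: "\<forall>j m. mdeg m < 2 \<longrightarrow> h j m = 0"
  shows "Dop lam h = hcomp (mould_sum (mould_of_fps (fps_ln 1)) (Bop lam h) UNIV)"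
proof -
  interpret graded_ops "Bop lam h" by (rule graded_ops_Bop[OF h])
  have "(\<lambda>\<phi>. Flin_inv lam (Fsub lam h \<phi>)) = mould_sum (mould_of_fps (1 + fps_X)) (Bop lam h) UNIV"
    using Fsub_eq_Flin_mould_sum_Bop[OF h] eq_Flin_comp_iff by blast
  then have "Dop lam h = hcomp (mlog (mould_sum (mould_of_fps (1 + fps_X)) (Bop lam h) UNIV))"
    by (intro ext) (simp only: Dop_def Dcomp_def)
  also have "\<dots> = hcomp (mould_sum (mould_log (mould_of_fps (1 + fps_X))) (Bop lam h) UNIV)"
    by (simp add: mlog_mould_sum mould_of_fps_def)
  finally show ?thesis by (simp add: mould_log_of_fps)
qed

lemma graded_ops_Dop:
  assumes h: "\<forall>j m. mdeg m < 2 \<longrightarrow> h j m = 0"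
  shows "graded_ops (Dop lam h)"
proof -
  interpret graded_ops "Bop lam h" by (rule graded_ops_Bop[OF h])
  have "mould_of_fps (fps_ln 1) [] = 0" by (simp add: mould_of_fps_def)
  then show ?thesis
    by unfold_locales (unfold Dop_eq_hcomp_mould_sum_Bop[OF h], rule homogeneous_hcomp,
        rule raises_deg_hcomp[OF raises_deg_mould_sum])
qed

lemma Fsub_eq_Flin_mould_sum_Dop:
  assumes h: "\<forall>j m. mdeg m < 2 \<longrightarrow> h j m = 0"
    and AA: "\<forall>m. Dop lam h m \<noteq> (\<lambda>\<phi> k. 0) \<longrightarrow> m \<in> AA"
  shows "Fsub lam h = Flin lam \<circ> mould_sum (mould_exp (mould_of_fps fps_X)) (Dop lam h) AA"
proof -
  interpret B: graded_ops "Bop lam h" by (rule graded_ops_Bop[OF h])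
  interpret D: graded_ops "Dop lam h" by (rule graded_ops_Dop[OF h])
  have "opsum (Dop lam h) AA = opsum (Dop lam h) UNIV"
    unfolding opsum_def by (intro ext infsum_cong_neutral) (use AA in \<open>auto simp: fun_eq_iff\<close>)
  also have "\<dots> = mould_sum (mould_of_fps (fps_ln 1)) (Bop lam h) UNIV"
    by (simp add: Dop_eq_hcomp_mould_sum_Bop[OF h] B.opsum_hcomp_mould_sum)
  finally have opsum_Dop:
    "opsum (Dop lam h) AA = mould_sum (mould_of_fps (fps_ln 1)) (Bop lam h) UNIV" .
  have "mould_sum (mould_exp (mould_of_fps fps_X)) (Dop lam h) AA
      = mexp (mould_sum (mould_of_fps fps_X) (Dop lam h) AA)"
    by (rule D.mexp_mould_sum[symmetric]) (simp add: mould_of_fps_def)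
  also have "\<dots> = mexp (mould_sum (mould_of_fps (fps_ln 1)) (Bop lam h) UNIV)"
    by (simp only: mould_of_fps_X D.mould_sum_length_one opsum_Dop)
  also have "\<dots> = mould_sum (mould_of_fps (1 + fps_X)) (Bop lam h) UNIV"
    by (simp add: B.mexp_mould_sum mould_of_fps_def mould_exp_of_fps fps_exp_compose_ln)
  finally show ?thesis
    using Fsub_eq_Flin_mould_sum_Bop[OF h] by simp
qed

theorem mainTheorem4:
  fixes lam :: "'n::finite \<Rightarrow> complex" and h :: "'n \<Rightarrow> 'n mser"
    and A AA :: "('n \<Rightarrow> int) set" and r :: nat
  assumes h_order: "\<forall>j m. mdeg m < 2 \<longrightarrow> h j m = 0"
    and h_analytic: "\<exists>\<rho>>0. \<forall>j. (\<lambda>m. norm (h j m) * \<rho> ^ mdeg m) summable_on UNIV"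
    and A_supp: "\<forall>n. Bop lam h n \<noteq> (\<lambda>\<phi> k. 0) \<longrightarrow> n \<in> A"
    and A_add: "\<forall>a\<in>A. \<forall>b\<in>A. (\<lambda>i. a i + b i) \<in> A"
    and AA_supp: "\<forall>m. Dop lam h m \<noteq> (\<lambda>\<phi> k. 0) \<longrightarrow> m \<in> AA"
    and AA_add: "\<forall>a\<in>AA. \<forall>b\<in>AA. (\<lambda>i. a i + b i) \<in> AA"
  shows "\<exists>Sem sem.
           Semtrim lam h r = Flin lam \<circ> mould_sum Sem (Dop lam h) AA \<and>
           Semtrim lam h r = Flin lam \<circ> mould_sum sem (Bop lam h) A"
proof -
  interpret B: graded_ops "Bop lam h" by (rule graded_ops_Bop[OF h_order])
  interpret D: graded_ops "Dop lam h" by (rule graded_ops_Dop[OF h_order])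
  have "mould_exp (mould_of_fps fps_X) [] = 1" "mould_of_fps (1 + fps_X) [] = 1"
    by (simp_all add: mould_of_fps_def)
  then show ?thesis
    using D.Semtrim_mould_sum[OF Fsub_eq_Flin_mould_sum_Dop[OF h_order AA_supp]]
      B.Semtrim_mould_sum[OF Fsub_eq_Flin_mould_sum_Bop[OF h_order A_supp]]
    by blast
qed

end
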